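(* Let $n\ge 2$, fix $\beta\in\partial\mathbb{D}$ and $\{\alpha_j\}_{j=0}^{n-2}\in\mathbb{D}^{n-1}$. Let $C_n(z)=C_n(z;\{\alpha_j\}_{j=0}^{n-2},\beta)$ and $S_n(z)=S_n(z;\{\alpha_j\}_{j=0}^{n-2},\beta)$, and let $C_{n-1}(z)=C_{n-1}(z;\{\alpha_{j+1}\}_{j=0}^{n-3},\beta)$ and $S_{n-1}(z)=S_{n-1}(z;\{\alpha_{j+1}\}_{j=0}^{n-3},\beta)$ be the corresponding functions with $\alpha_0$ removed. Then \[ C_n(z)=z\bigl(C_{n-1}(z)-\alpha_0S_{n-1}(z)\bigr),\qquad S_n(z)=-\bar\alpha_0C_{n-1}(z)+S_{n-1}(z). \]
   Context: For Verblunsky coefficients $\alpha_0,\alpha_1,\dots\in\mathbb{D}$ the monic orthogonal polynomials on the unit circle satisfy $\Phi_0=1$, $\Phi_{k+1}(z)=z\Phi_k(z)-\bar\alpha_k\Phi_k^*(z)$ with $\Phi_k^*(z)=z^k\overline{\Phi_k(1/\bar z)}$; the second kind polynomials $\Psi_k$ satisfy the same recursion with each $\alpha_j$ replaced by $-\alpha_j$. For $m\ge1$ and $\beta\in\partial\mathbb{D}$, $P_m(z;\{\alpha_j\}_{j=0}^{m-2},\beta)=z\Phi_{m-1}(z)-\bar\beta\Phi_{m-1}^*(z)$ and $Q_m(z;\{\alpha_j\}_{j=0}^{m-2},\beta)=z\Psi_{m-1}(z)+\bar\beta\Psi_{m-1}^*(z)$ (with $\Phi_{m-1},\Psi_{m-1}$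 built from $\alpha_0,\dots,\alpha_{m-2}$), and $C_m=\tfrac12(P_m+Q_m)$, $S_m=\tfrac12(P_m-Q_m)$. *)

theory Defs
  imports "HOL-Analysis.Analysis" "HOL-Computational_Algebra.Polynomial"
begin

text \<open>Reversed polynomial of degree (at most) k:
  p^*(z) = z^k * conj (p (1 / conj z)), i.e. coefficients conjugated and reversed w.r.t. k.\<close>
definition pstar :: "nat \<Rightarrow> complex poly \<Rightarrow> complex poly" where
  "pstar k p = Poly (map (\<lambda>i. cnj (coeff p (k - i))) [0..<Suc k])"

text \<open>Monic OPUC Phi_k built from Verblunsky coefficients a 0, ..., a (k-1).\<close>
fun Phi :: "(nat \<Rightarrow> complex) \<Rightarrow> nat \<Rightarrow> complex poly" where
  "Phi a 0 = 1"
| "Phi a (Suc k) = pCons 0 (Phi a k) - smult (cnj (a k)) (pstar k (Phi a k))"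

definition Psi :: "(nat \<Rightarrow> complex) \<Rightarrow> nat \<Rightarrow> complex poly" where
  "Psi a k = Phi (\<lambda>j. - a j) k"

definition Ppara :: "nat \<Rightarrow> (nat \<Rightarrow> complex) \<Rightarrow> complex \<Rightarrow> complex poly" where
  "Ppara m a \<beta> = pCons 0 (Phi a (m - 1)) - smult (cnj \<beta>) (pstar (m - 1) (Phi a (m - 1)))"

definition Qpara :: "nat \<Rightarrow> (nat \<Rightarrow> complex) \<Rightarrow> complex \<Rightarrow> complex poly" where
  "Qpara m a \<beta> = pCons 0 (Psi a (m - 1)) + smult (cnj \<beta>) (pstar (m - 1) (Psi a (m - 1)))"

definition Cpara :: "nat \<Rightarrow> (nat \<Rightarrow> complex) \<Rightarrow> complex \<Rightarrow> complex poly" where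
  "Cpara m a \<beta> = smult (1/2) (Ppara m a \<beta> + Qpara m a \<beta>)"

definition Spara :: "nat \<Rightarrow> (nat \<Rightarrow> complex) \<Rightarrow> complex \<Rightarrow> complex poly" where
  "Spara m a \<beta> = smult (1/2) (Ppara m a \<beta> - Qpara m a \<beta>)"

end

theory Submission
  imports Defs
begin

(* At a fixed point z the pair (Phi_k(z), Phi_k^*(z)) is obtained from (1, 1) by the
   Szego transfer maps (u, v) |-> (z u - conj(alpha_k) v, v - alpha_k z u), and the pair
   (Psi_k(z), -Psi_k^*(z)) by the same maps from (1, -1). P_n(z) and Q_n(z) are the same
   functional (u, v) |-> z u - conj(beta) v of the respective pair, so by linearity C_n(z)
   and S_n(z) are that functional applied to the images of (1, 0) and (0, 1). Peeling off
   the first transfer map, which sends (1, 0) to z (1, 0) - alpha_0 z (0, 1) and (0, 1) to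
   -conj(alpha_0) (1, 0) + (0, 1), gives the recursion. *)

lemma coeff_pstar: "coeff (pstar k p) i = (if i \<le> k then cnj (coeff p (k - i)) else 0)"
  unfolding pstar_def by (auto simp: nth_default_def simp del: upt_Suc)

lemma degree_pstar_le: "degree (pstar k p) \<le> k"
  by (rule degree_le) (simp add: coeff_pstar)

lemma pstar_diff: "pstar k (p - q) = pstar k p - pstar k q"
  by (rule poly_eqI) (simp add: coeff_pstar)

lemma pstar_smult: "pstar k (smult c p) = smult (cnj c) (pstar k p)"
  by (rule poly_eqI) (simp add: coeff_pstar)

lemma pstar_pCons_0: "degree p \<le> k \<Longrightarrow> pstar (Suc k) (pCons 0 p) = pstar k p"
  by (rule poly_eqI) (auto simp: coeff_pstar coeff_pCons Suc_diff_le split: nat.split)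

lemma pstar_Suc: "degree p \<le> k \<Longrightarrow> pstar (Suc k) p = pCons 0 (pstar k p)"
  by (rule poly_eqI) (auto simp: coeff_pstar coeff_pCons coeff_eq_0 split: nat.split)

lemma pstar_pstar: "degree p \<le> k \<Longrightarrow> pstar k (pstar k p) = p"
  by (rule poly_eqI) (auto simp: coeff_pstar coeff_eq_0)

lemma degree_Phi_le: "degree (Phi a k) \<le> k"
proof (induction k)
  case 0
  then show ?case by simp
next
  case (Suc k)
  have "degree (pCons 0 (Phi a k)) \<le> Suc k"
    using Suc degree_pCons_le le_trans by (metis Suc_le_mono)
  moreover have "degree (smult (cnj (a k)) (pstar k (Phi a k))) \<le> Suc k"
    using degree_pstar_le[of k "Phi a k"] by (simp add: le_SucI)
  ultimately show ?case
    by (simp add: degree_diff_le)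
qed

lemma pstar_Phi_Suc:
  "pstar (Suc k) (Phi a (Suc k)) = pstar k (Phi a k) - smult (a k) (pCons 0 (Phi a k))"
  using degree_Phi_le[of a k] degree_pstar_le[of k "Phi a k"]
  by (simp add: pstar_diff pstar_smult pstar_pCons_0 pstar_Suc pstar_pstar)

definition szego_step :: "complex \<Rightarrow> complex \<Rightarrow> complex \<times> complex \<Rightarrow> complex \<times> complex" where
  "szego_step \<alpha> z w = (z * fst w - cnj \<alpha> * snd w, snd w - \<alpha> * z * fst w)"

fun szego_iter :: "(nat \<Rightarrow> complex) \<Rightarrow> complex \<Rightarrow> nat \<Rightarrow> complex \<times> complex \<Rightarrow> complex \<times> complex" where
  "szego_iter a z 0 w = w"
| "szego_iter a z (Suc k) w = szego_step (a k) z (szego_iter a z k w)"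

lemma szego_iter_Suc_shift:
  "szego_iter a z (Suc k) w = szego_iter (\<lambda>j. a (Suc j)) z k (szego_step (a 0) z w)"
  by (induction k) auto

lemma szego_iter_linear:
  "szego_iter a z k (p, q) =
     (p * fst (szego_iter a z k (1, 0)) + q * fst (szego_iter a z k (0, 1)),
      p * snd (szego_iter a z k (1, 0)) + q * snd (szego_iter a z k (0, 1)))"
  by (induction k) (auto simp: szego_step_def algebra_simps)

lemma szego_iter_uminus:
  "szego_iter (\<lambda>j. - a j) z k (p, q) = apsnd uminus (szego_iter a z k (p, - q))"
  by (induction k) (auto simp: szego_step_def algebra_simps)

lemma poly_Phi_pair:
  "(poly (Phi a k) z, poly (pstar k (Phi a k)) z) = szego_iter a z k (1, 1)"
proof (induction k)
  case 0
  then show ?case by (simp add: pstar_def)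
next
  case (Suc k)
  then show ?case
    unfolding pstar_Phi_Suc by (simp add: szego_step_def prod_eq_iff algebra_simps)
qed

lemma poly_Psi_pair:
  "(poly (Psi a k) z, - poly (pstar k (Psi a k)) z) = szego_iter a z k (1, - 1)"
  using poly_Phi_pair[of "\<lambda>j. - a j" k z]
  by (simp add: Psi_def szego_iter_uminus prod_eq_iff)

lemma poly_Ppara:
  "poly (Ppara (Suc k) a \<beta>) z
     = z * fst (szego_iter a z k (1, 1)) - cnj \<beta> * snd (szego_iter a z k (1, 1))"
  unfolding Ppara_def poly_Phi_pair[symmetric] by simp

lemma poly_Qpara:
  "poly (Qpara (Suc k) a \<beta>) z
     = z * fst (szego_iter a z k (1, - 1)) - cnj \<beta> * snd (szego_iter a z k (1, - 1))"
  unfolding Qpara_def poly_Psi_pair[symmetric] by simp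

lemma poly_Cpara:
  "poly (Cpara (Suc k) a \<beta>) z
     = z * fst (szego_iter a z k (1, 0)) - cnj \<beta> * snd (szego_iter a z k (1, 0))"
  unfolding Cpara_def poly_smult poly_add poly_Ppara poly_Qpara
    szego_iter_linear[of a z k 1 1] szego_iter_linear[of a z k 1 "- 1"]
  by (simp add: algebra_simps)

lemma poly_Spara:
  "poly (Spara (Suc k) a \<beta>) z
     = z * fst (szego_iter a z k (0, 1)) - cnj \<beta> * snd (szego_iter a z k (0, 1))"
  unfolding Spara_def poly_smult poly_diff poly_Ppara poly_Qpara
    szego_iter_linear[of a z k 1 1] szego_iter_linear[of a z k 1 "- 1"]
  by (simp add: algebra_simps)

theorem theorem4p2:
  fixes n :: nat and \<alpha> :: "nat \<Rightarrow> complex" and \<beta> z :: complex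
  assumes "n \<ge> 2"
    and "norm \<beta> = 1"
    and "\<forall>j \<le> n - 2. norm (\<alpha> j) < 1"
  shows "poly (Cpara n \<alpha> \<beta>) z
           = z * (poly (Cpara (n - 1) (\<lambda>j. \<alpha> (Suc j)) \<beta>) z
                  - \<alpha> 0 * poly (Spara (n - 1) (\<lambda>j. \<alpha> (Suc j)) \<beta>) z)
       \<and> poly (Spara n \<alpha> \<beta>) z
           = - cnj (\<alpha> 0) * poly (Cpara (n - 1) (\<lambda>j. \<alpha> (Suc j)) \<beta>) z
             + poly (Spara (n - 1) (\<lambda>j. \<alpha> (Suc j)) \<beta>) z"
proof -
  obtain k where n: "n = Suc (Suc k)"
    using assms(1) by (metis add_2_eq_Suc le_Suc_ex)
  define b where "b = (\<lambda>j. \<alpha> (Suc j))"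
  have first_step:
    "szego_iter \<alpha> z (Suc k) w = szego_iter b z k (szego_step (\<alpha> 0) z w)" for w
    unfolding b_def by (rule szego_iter_Suc_shift)
  show ?thesis
    unfolding n diff_Suc_1 b_def[symmetric] poly_Cpara poly_Spara first_step szego_step_def
    using szego_iter_linear[of b z k z "- \<alpha> 0 * z"]
      szego_iter_linear[of b z k "- cnj (\<alpha> 0)" 1]
    by (simp add: algebra_simps)
qed

end
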